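(* Let $\Delta\subset\mathbb{R}^n_{\ge0}$ be a Newton polyhedron with a loose edge $E$ with endpoints $a=(a_1,\dots,a_n)$ and $b=(b_1,\dots,b_n)$. If $\min(a_1,b_1)=\dots=\min(a_n,b_n)=0$, then $a$ and $b$ are the only vertices of $\Delta$.
   Context: A Newton polyhedron is the convex hull of $S+\mathbb{R}^n_{\ge0}$ for a nonempty finite set $S\subset\mathbb{Z}^n_{\ge0}$. For $\xi\in\mathbb{R}^n_{\ge0}$, the face $\Delta^\xi=\{a\in\Delta:\langle\xi,a\rangle=\min_{b\in\Delta}\langle\xi,b\rangle\}$; it is compact iff $\xi\in\mathbb{R}^n_{>0}$. Vertices and edges are faces of dimension 0 and 1; a loose edge is a compact edge not contained in any compact face of dimension $\ge2$. *)

theory Defs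
  imports "HOL-Analysis.Analysis"
begin

definition nonneg_orthant :: "(real ^ 'n) set" where
  "nonneg_orthant = {v. \<forall>i. 0 \<le> v $ i}"

definition newton_polyhedron_of :: "(real ^ 'n) set \<Rightarrow> (real ^ 'n) set" where
  "newton_polyhedron_of S = convex hull {s + v | s v. s \<in> S \<and> v \<in> nonneg_orthant}"

definition is_newton_polyhedron :: "(real ^ 'n) set \<Rightarrow> bool" where
  "is_newton_polyhedron \<Delta> \<longleftrightarrow>
     (\<exists>S. finite S \<and> S \<noteq> {} \<and> (\<forall>s\<in>S. \<forall>i. s $ i \<in> \<nat>) \<and> \<Delta> = newton_polyhedron_of S)"

definition face_dir :: "(real ^ 'n) set \<Rightarrow> real ^ 'n \<Rightarrow> (real ^ 'n) set" where
  "face_dir \<Delta> \<xi> = {a \<in> \<Delta>. \<forall>b\<in>\<Delta>. \<xi> \<bullet> a \<le> \<xi> \<bullet> b}"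

definition is_face :: "(real ^ 'n) set \<Rightarrow> (real ^ 'n) set \<Rightarrow> bool" where
  "is_face \<Delta> F \<longleftrightarrow> (\<exists>\<xi> \<in> nonneg_orthant. F = face_dir \<Delta> \<xi>)"

definition is_compact_face :: "(real ^ 'n) set \<Rightarrow> (real ^ 'n) set \<Rightarrow> bool" where
  "is_compact_face \<Delta> F \<longleftrightarrow> is_face \<Delta> F \<and> compact F"

definition is_vertex :: "(real ^ 'n) set \<Rightarrow> real ^ 'n \<Rightarrow> bool" where
  "is_vertex \<Delta> v \<longleftrightarrow> is_face \<Delta> {v}"

definition is_edge :: "(real ^ 'n) set \<Rightarrow> (real ^ 'n) set \<Rightarrow> bool" where
  "is_edge \<Delta> E \<longleftrightarrow> is_face \<Delta> E \<and> aff_dim E = 1"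

definition is_loose_edge :: "(real ^ 'n) set \<Rightarrow> (real ^ 'n) set \<Rightarrow> bool" where
  "is_loose_edge \<Delta> E \<longleftrightarrow> is_edge \<Delta> E \<and> compact E \<and>
     \<not> (\<exists>F. is_compact_face \<Delta> F \<and> aff_dim F \<ge> 2 \<and> E \<subseteq> F)"

end

theory Submission
  imports Defs
begin

text \<open>Since the loose edge \<open>face_dir \<Delta> \<xi>0 = [a, b]\<close> is compact, \<open>\<xi>0\<close> is strictly positive.
  Call \<open>\<xi> \<ge> 0\<close> balanced if \<open>\<xi> \<bullet> a = \<xi> \<bullet> b\<close>. If a balanced \<open>\<xi>\<close> took a smaller value than
  \<open>\<xi> \<bullet> a\<close> somewhere on \<open>\<Delta>\<close>, rotating \<open>\<xi>0\<close> towards \<open>\<xi>\<close> until the minimal face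
  first picks up a further point of the generating set \<open>S\<close> would give a compact face of
  dimension at least two containing the edge, contradicting looseness. So every balanced form is minimised at \<open>a\<close>. As \<open>a\<close> and \<open>b\<close>
  have disjoint supports, the forms \<open>x $ i / a $ i + x $ j / b $ j\<close> are balanced, and this forces
  \<open>\<Delta> \<subseteq> [a, b] + nonneg_orthant\<close>; hence only \<open>a\<close> and \<open>b\<close> can be vertices, and both are,
  being cut out by \<open>\<xi>0 + axis j 1\<close> for a coordinate \<open>j\<close> in the support of the other endpoint.\<close>

lemma mem_nonneg_orthant: "v \<in> nonneg_orthant \<longleftrightarrow> (\<forall>i. 0 \<le> v $ i)"
  by (simp add: nonneg_orthant_def)

lemma convex_nonneg_orthant: "convex (nonneg_orthant :: (real ^ 'n) set)"
  unfolding convex_def nonneg_orthant_def by simp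

lemma closed_nonneg_orthant: "closed (nonneg_orthant :: (real ^ 'n) set)"
  unfolding nonneg_orthant_def by (rule closed_positive_orthant)

lemma nonneg_orthant_add: "v \<in> nonneg_orthant \<Longrightarrow> w \<in> nonneg_orthant \<Longrightarrow> v + w \<in> nonneg_orthant"
  by (simp add: mem_nonneg_orthant)

lemma axis_in_nonneg_orthant: "c \<ge> 0 \<Longrightarrow> axis i c \<in> (nonneg_orthant :: (real ^ 'n) set)"
  by (simp add: mem_nonneg_orthant axis_def)

lemma inner_nonneg_orthant:
  "\<xi> \<in> nonneg_orthant \<Longrightarrow> v \<in> nonneg_orthant \<Longrightarrow> 0 \<le> \<xi> \<bullet> (v :: real ^ 'n)"
  unfolding inner_vec_def mem_nonneg_orthant by (auto intro!: sum_nonneg)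

lemma inner_pos_eq_0_iff:
  assumes "\<forall>k. 0 < \<xi> $ k" "v \<in> nonneg_orthant"
  shows "\<xi> \<bullet> v = 0 \<longleftrightarrow> v = (0 :: real ^ 'n)"
proof -
  have "\<xi> \<bullet> v = 0 \<longleftrightarrow> (\<forall>k. \<xi> $ k * v $ k = 0)"
    unfolding inner_vec_def using assms
    by (subst sum_nonneg_eq_0_iff) (auto simp: mem_nonneg_orthant less_imp_le)
  also have "\<dots> \<longleftrightarrow> v = 0"
    using assms(1) by (metis less_irrefl mult_eq_0_iff vec_eq_iff zero_index)
  finally show ?thesis .
qed

lemma axis_inner: "axis i (c :: real) \<bullet> x = c * x $ i"
  by (simp add: inner_commute inner_axis)

lemma newton_polyhedron_of_eq:
  "newton_polyhedron_of S = convex hull S + (nonneg_orthant :: (real ^ 'n) set)"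
proof -
  have "{s + v | s v. s \<in> S \<and> v \<in> nonneg_orthant} = S + (nonneg_orthant :: (real ^ 'n) set)"
    by (auto simp: set_plus_def)
  then show ?thesis
    unfolding newton_polyhedron_of_def
    by (simp add: convex_hull_set_plus hull_same convex_nonneg_orthant)
qed

lemma convex_newton_polyhedron_of: "convex (newton_polyhedron_of S)"
  unfolding newton_polyhedron_of_def by (rule convex_convex_hull)

lemma closed_newton_polyhedron_of:
  "finite S \<Longrightarrow> closed (newton_polyhedron_of (S :: (real ^ 'n) set))"
proof -
  assume "finite S"
  have "convex hull S + nonneg_orthant = (\<Union>x\<in>convex hull S. \<Union>y\<in>nonneg_orthant. {x + y})"
    by (auto simp: set_plus_def)
  then show ?thesis
    unfolding newton_polyhedron_of_eq using \<open>finite S\<close>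
    by (metis compact_closed_sums finite_imp_compact_convex_hull closed_nonneg_orthant)
qed

lemma newton_polyhedron_of_add_nonneg:
  assumes "p \<in> newton_polyhedron_of S" "w \<in> nonneg_orthant"
  shows "p + w \<in> newton_polyhedron_of S"
proof -
  obtain c v where "c \<in> convex hull S" "v \<in> nonneg_orthant" "p = c + v"
    using assms(1) unfolding newton_polyhedron_of_eq by (auto elim: set_plus_elim)
  then show ?thesis
    unfolding newton_polyhedron_of_eq
    using nonneg_orthant_add[of v w] assms(2) by (auto simp: add.assoc intro!: set_plus_intro)
qed

lemma subset_newton_polyhedron_of: "S \<subseteq> newton_polyhedron_of (S :: (real ^ 'n) set)"
proof
  fix x assume "x \<in> S"
  then have "x + 0 \<in> convex hull S + nonneg_orthant"
    by (intro set_plus_intro hull_inc) (auto simp: mem_nonneg_orthant)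
  then show "x \<in> newton_polyhedron_of S" by (simp add: newton_polyhedron_of_eq)
qed

lemma newton_polyhedron_of_subset_nonneg_orthant:
  "S \<subseteq> nonneg_orthant \<Longrightarrow> newton_polyhedron_of S \<subseteq> (nonneg_orthant :: (real ^ 'n) set)"
proof -
  assume "S \<subseteq> nonneg_orthant"
  then have "convex hull S \<subseteq> nonneg_orthant" by (intro hull_minimal convex_nonneg_orthant)
  then show ?thesis
    unfolding newton_polyhedron_of_eq by (auto elim!: set_plus_elim intro: nonneg_orthant_add)
qed

lemma newton_polyhedron_of_inner_ge:
  assumes "\<xi> \<in> nonneg_orthant" "\<forall>s\<in>S. r \<le> \<xi> \<bullet> s" "p \<in> newton_polyhedron_of S"
  shows "r \<le> \<xi> \<bullet> (p :: real ^ 'n)"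
proof -
  obtain c w where c: "c \<in> convex hull S" and w: "w \<in> nonneg_orthant" and p: "p = c + w"
    using assms(3) unfolding newton_polyhedron_of_eq by (auto elim: set_plus_elim)
  have "convex hull S \<subseteq> {x. r \<le> \<xi> \<bullet> x}"
    using assms(2) by (intro hull_minimal) (auto simp: convex_halfspace_ge)
  with c inner_nonneg_orthant[OF assms(1) w] show ?thesis
    by (auto simp: p inner_add_right)
qed

lemma face_dir_subset: "face_dir D \<xi> \<subseteq> D"
  by (auto simp: face_dir_def)

lemma face_dir_eq_sublevel:
  "a \<in> face_dir D \<xi> \<Longrightarrow> face_dir D \<xi> = {p \<in> D. \<xi> \<bullet> p \<le> \<xi> \<bullet> a}"
  by (auto simp: face_dir_def intro: order_trans)

lemma convex_face_dir:
  assumes "convex D"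
  shows "convex (face_dir D \<xi>)"
proof -
  have "face_dir D \<xi> = D \<inter> (\<Inter>b\<in>D. {a. \<xi> \<bullet> a \<le> \<xi> \<bullet> b})"
    by (auto simp: face_dir_def)
  then show ?thesis
    using assms by (simp add: convex_Int convex_INT convex_halfspace_le)
qed

lemma compact_face_dir:
  assumes "closed D" "D \<subseteq> nonneg_orthant" "\<forall>k. 0 < \<eta> $ k"
  shows "compact (face_dir D (\<eta> :: real ^ 'n))"
proof (cases "face_dir D \<eta> = {}")
  case False
  then obtain q where q: "q \<in> face_dir D \<eta>" by blast
  have "face_dir D \<eta> = D \<inter> {p. \<eta> \<bullet> p \<le> \<eta> \<bullet> q}"
    using face_dir_eq_sublevel[OF q] by auto
  then have closed: "closed (face_dir D \<eta>)"
    by (simp add: closed_Int assms(1) closed_halfspace_le)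
  have "face_dir D \<eta> \<subseteq> cbox 0 (\<chi> k. (\<eta> \<bullet> q) / \<eta> $ k)"
  proof (intro subsetI, unfold mem_box_cart, intro allI)
    fix p k assume p: "p \<in> face_dir D \<eta>"
    then have nonneg: "\<forall>i. 0 \<le> p $ i" and le: "\<eta> \<bullet> p \<le> \<eta> \<bullet> q"
      using assms(2) q face_dir_subset by (fastforce simp: mem_nonneg_orthant face_dir_def)+
    have "\<eta> $ k * p $ k \<le> (\<Sum>i\<in>UNIV. \<eta> $ i * p $ i)"
      by (rule member_le_sum) (use nonneg assms(3) in \<open>auto intro: mult_nonneg_nonneg less_imp_le\<close>)
    then have "\<eta> $ k * p $ k \<le> \<eta> \<bullet> q"
      using le by (simp add: inner_vec_def)
    then show "0 $ k \<le> p $ k \<and> p $ k \<le> (\<chi> k. (\<eta> \<bullet> q) / \<eta> $ k) $ k"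
      using nonneg assms(3) by (simp add: pos_le_divide_eq mult.commute)
  qed
  then show ?thesis
    using closed bounded_cbox bounded_subset compact_eq_bounded_closed by blast
qed simp

lemma face_dir_direction_pos:
  assumes up: "\<And>p w. p \<in> D \<Longrightarrow> w \<in> nonneg_orthant \<Longrightarrow> p + w \<in> D"
    and "\<xi> \<in> nonneg_orthant" "bounded (face_dir D \<xi>)" "a \<in> face_dir D \<xi>"
  shows "0 < (\<xi> :: real ^ 'n) $ k"
proof (rule ccontr)
  assume "\<not> 0 < \<xi> $ k"
  then have zero: "\<xi> $ k = 0"
    using assms(2) by (simp add: mem_nonneg_orthant order.antisym)
  obtain B where B: "\<And>x. x \<in> face_dir D \<xi> \<Longrightarrow> norm x \<le> B"
    using assms(3) bounded_iff by blast
  define t where "t = B + norm a + 1"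
  have "t \<ge> 0"
    using B[OF assms(4)] norm_ge_zero[of a] unfolding t_def by linarith
  then have "a + axis k t \<in> D"
    using up assms(4) face_dir_subset axis_in_nonneg_orthant by blast
  moreover have "\<xi> \<bullet> (a + axis k t) = \<xi> \<bullet> a"
    by (simp add: inner_add_right inner_axis zero)
  ultimately have "a + axis k t \<in> face_dir D \<xi>"
    using assms(4) by (simp add: face_dir_def)
  then have "\<bar>(a + axis k t) $ k\<bar> \<le> B"
    using B component_le_norm_cart order_trans by blast
  moreover have "\<bar>a $ k\<bar> \<le> norm a"
    by (rule component_le_norm_cart)
  ultimately show False
    by (simp add: t_def axis_def)
qed

lemma newton_polyhedron_segment_face_direction_pos:
  assumes "\<xi>0 \<in> nonneg_orthant" "face_dir (newton_polyhedron_of S) \<xi>0 = closed_segment a b"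
  shows "0 < (\<xi>0 :: real ^ 'n) $ k"
  using face_dir_direction_pos[OF newton_polyhedron_of_add_nonneg assms(1), of S a] assms(2)
  by (simp add: compact_imp_bounded compact_segment)

lemma newton_polyhedron_segment_face_endpoint_nonzero:
  assumes "S \<subseteq> nonneg_orthant" "\<xi>0 \<in> nonneg_orthant"
    and edge: "face_dir (newton_polyhedron_of S) \<xi>0 = closed_segment a b" and "a \<noteq> b"
  shows "a \<noteq> (0 :: real ^ 'n)"
proof
  assume "a = 0"
  have "a \<in> face_dir (newton_polyhedron_of S) \<xi>0" "b \<in> face_dir (newton_polyhedron_of S) \<xi>0"
    using edge by auto
  then have "\<xi>0 \<bullet> b \<le> \<xi>0 \<bullet> a" "\<xi>0 \<bullet> a \<le> \<xi>0 \<bullet> b" "b \<in> nonneg_orthant"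
    using newton_polyhedron_of_subset_nonneg_orthant[OF assms(1)] by (auto simp: face_dir_def)
  then have "\<xi>0 \<bullet> b = 0" "b \<in> nonneg_orthant"
    using \<open>a = 0\<close> by simp_all
  then show False
    using inner_pos_eq_0_iff newton_polyhedron_segment_face_direction_pos[OF assms(2) edge]
      \<open>a = 0\<close> \<open>a \<noteq> b\<close> by metis
qed

lemma exists_tilt_to_new_zero:
  fixes g0 g1 :: "'a \<Rightarrow> real"
  assumes "finite S" "\<forall>s\<in>S. 0 \<le> g0 s" "s0 \<in> S" "g1 s0 < 0"
  obtains \<theta> s1 where "0 \<le> \<theta>" "\<theta> < 1" "s1 \<in> S" "g1 s1 < 0"
    "(1 - \<theta>) * g0 s1 + \<theta> * g1 s1 = 0" "\<forall>s\<in>S. 0 \<le> (1 - \<theta>) * g0 s + \<theta> * g1 s"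
proof -
  define N where "N = {s \<in> S. g1 s < 0}"
  define th where "th s = g0 s / (g0 s - g1 s)" for s
  have gap: "0 < g0 s - g1 s" if "s \<in> N" for s
    using that assms(2) by (auto simp: N_def)
  obtain s1 where s1: "s1 \<in> N" and least: "\<And>s. s \<in> N \<Longrightarrow> th s1 \<le> th s"
    using ex_is_arg_min_if_finite[of N th] assms(1,3,4)
    by (auto simp: N_def is_arg_min_linorder)
  have "\<theta> * (g0 s - g1 s) \<le> g0 s" if "s \<in> N" "\<theta> \<le> th s" for \<theta> s
    using that gap[OF \<open>s \<in> N\<close>] by (simp add: th_def le_divide_eq)
  then have nonneg: "0 \<le> (1 - th s1) * g0 s + th s1 * g1 s" if "s \<in> S" for s
  proof (cases "s \<in> N")
    case False
    moreover have "0 \<le> th s1" "th s1 \<le> 1"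
      using s1 gap[OF s1] assms(2) by (auto simp: N_def th_def)
    ultimately show ?thesis
      using that assms(2) by (auto simp: N_def intro!: add_nonneg_nonneg mult_nonneg_nonneg)
  qed (use least in \<open>fastforce simp: algebra_simps\<close>)
  show ?thesis
  proof (rule that[of "th s1" s1])
    show "0 \<le> th s1" "th s1 < 1"
      using s1 gap[OF s1] assms(2) by (auto simp: N_def th_def divide_less_eq)
    show "(1 - th s1) * g0 s1 + th s1 * g1 s1 = 0"
      using gap[OF s1] by (simp add: th_def field_simps)
  qed (use s1 nonneg in \<open>auto simp: N_def\<close>)
qed

lemma aff_dim_eq_2_if_separated:
  fixes a b s :: "'a :: euclidean_space"
  assumes "a \<noteq> b" "\<xi> \<bullet> a = \<xi> \<bullet> b" "\<xi> \<bullet> s \<noteq> \<xi> \<bullet> a"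
  shows "aff_dim {a, b, s} = 2"
proof -
  have "s \<notin> affine hull {a, b}"
  proof
    assume "s \<in> affine hull {a, b}"
    then obtain u v where "s = u *\<^sub>R a + v *\<^sub>R b" "u + v = 1"
      by (auto simp: affine_hull_2)
    then show False
      using assms(2,3) by (simp add: inner_add_right flip: distrib_right)
  qed
  moreover have "s \<noteq> a" "s \<noteq> b"
    using calculation hull_inc[of _ "{a, b}"] by auto
  ultimately have "\<not> affine_dependent {a, b, s}" "card {a, b, s} = 3"
    using collinear_3_affine_hull[OF assms(1)] affine_dependent_imp_collinear_3 assms(1)
    by auto
  then show ?thesis
    using aff_dim_affine_independent[of "{a, b, s}"] by simp
qed

lemma exists_tilted_face:
  fixes S :: "(real ^ 'n) set"
  defines "\<Delta> \<equiv> newton_polyhedron_of S"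
  assumes "finite S" and pos: "\<forall>k. 0 < \<xi>0 $ k" and a_face: "a \<in> face_dir \<Delta> \<xi>0"
    and "\<xi> \<in> nonneg_orthant" "s0 \<in> S" "\<xi> \<bullet> s0 < \<xi> \<bullet> a"
  obtains \<eta> s1 where "\<forall>k. 0 < \<eta> $ k" "a \<in> face_dir \<Delta> \<eta>" "s1 \<in> face_dir \<Delta> \<eta>" "\<xi> \<bullet> s1 < \<xi> \<bullet> a"
    "\<And>x. \<xi>0 \<bullet> x = \<xi>0 \<bullet> a \<Longrightarrow> \<xi> \<bullet> x = \<xi> \<bullet> a \<Longrightarrow> \<eta> \<bullet> x = \<eta> \<bullet> a"
proof -
  have "\<forall>s\<in>S. 0 \<le> \<xi>0 \<bullet> s - \<xi>0 \<bullet> a"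
    using a_face subset_newton_polyhedron_of[of S] unfolding face_dir_def \<Delta>_def by auto
  then obtain \<theta> s1 where \<theta>: "0 \<le> \<theta>" "\<theta> < 1" and s1: "s1 \<in> S" "\<xi> \<bullet> s1 - \<xi> \<bullet> a < 0"
    and tangent: "(1 - \<theta>) * (\<xi>0 \<bullet> s1 - \<xi>0 \<bullet> a) + \<theta> * (\<xi> \<bullet> s1 - \<xi> \<bullet> a) = 0"
    and supporting: "\<forall>s\<in>S. 0 \<le> (1 - \<theta>) * (\<xi>0 \<bullet> s - \<xi>0 \<bullet> a) + \<theta> * (\<xi> \<bullet> s - \<xi> \<bullet> a)"
    using exists_tilt_to_new_zero[of S "\<lambda>s. \<xi>0 \<bullet> s - \<xi>0 \<bullet> a" s0 "\<lambda>s. \<xi> \<bullet> s - \<xi> \<bullet> a"]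
      \<open>finite S\<close> \<open>s0 \<in> S\<close> \<open>\<xi> \<bullet> s0 < \<xi> \<bullet> a\<close> by auto
  define \<eta> where "\<eta> = (1 - \<theta>) *\<^sub>R \<xi>0 + \<theta> *\<^sub>R \<xi>"
  have \<eta>_diff: "\<eta> \<bullet> x - \<eta> \<bullet> a = (1 - \<theta>) * (\<xi>0 \<bullet> x - \<xi>0 \<bullet> a) + \<theta> * (\<xi> \<bullet> x - \<xi> \<bullet> a)" for x
    by (simp add: \<eta>_def inner_add_left algebra_simps)
  have \<eta>_pos: "\<forall>k. 0 < \<eta> $ k"
    using pos \<theta> \<open>\<xi> \<in> nonneg_orthant\<close>
    by (auto simp: \<eta>_def mem_nonneg_orthant intro!: add_pos_nonneg)
  then have "\<eta> \<in> nonneg_orthant"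
    by (simp add: mem_nonneg_orthant less_imp_le)
  moreover have "\<forall>s\<in>S. \<eta> \<bullet> a \<le> \<eta> \<bullet> s"
    using supporting \<eta>_diff by (metis diff_ge_0_iff_ge)
  ultimately have "\<eta> \<bullet> a \<le> \<eta> \<bullet> q" if "q \<in> \<Delta>" for q
    using newton_polyhedron_of_inner_ge that unfolding \<Delta>_def by blast
  then have in_face: "x \<in> face_dir \<Delta> \<eta>" if "x \<in> \<Delta>" "\<eta> \<bullet> x = \<eta> \<bullet> a" for x
    using that by (simp add: face_dir_def)
  show ?thesis
  proof (rule that[OF \<eta>_pos])
    show "a \<in> face_dir \<Delta> \<eta>"
      using a_face face_dir_subset in_face by blast
    show "s1 \<in> face_dir \<Delta> \<eta>"
      using in_face \<eta>_diff[of s1] tangent s1(1) subset_newton_polyhedron_of[of S]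
      unfolding \<Delta>_def by auto
    show "\<eta> \<bullet> x = \<eta> \<bullet> a" if "\<xi>0 \<bullet> x = \<xi>0 \<bullet> a" "\<xi> \<bullet> x = \<xi> \<bullet> a" for x
      using \<eta>_diff[of x] that by simp
  qed (use s1 in simp)
qed

lemma loose_edge_balanced_form_ge:
  fixes S :: "(real ^ 'n) set"
  defines "\<Delta> \<equiv> newton_polyhedron_of S"
  assumes "finite S" "S \<subseteq> nonneg_orthant"
    and pos: "\<forall>k. 0 < \<xi>0 $ k" and edge: "face_dir \<Delta> \<xi>0 = closed_segment a b"
    and loose: "\<not> (\<exists>F. is_compact_face \<Delta> F \<and> aff_dim F \<ge> 2 \<and> closed_segment a b \<subseteq> F)"
    and "a \<noteq> b" "\<xi> \<in> nonneg_orthant" "\<xi> \<bullet> a = \<xi> \<bullet> b" "p \<in> \<Delta>"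
  shows "\<xi> \<bullet> a \<le> \<xi> \<bullet> p"
proof (rule ccontr)
  assume "\<not> \<xi> \<bullet> a \<le> \<xi> \<bullet> p"
  then obtain s0 where "s0 \<in> S" "\<xi> \<bullet> s0 < \<xi> \<bullet> a"
    using newton_polyhedron_of_inner_ge[OF \<open>\<xi> \<in> nonneg_orthant\<close> _ \<open>p \<in> \<Delta>\<close>[unfolded \<Delta>_def]]
    by (meson not_le)
  have a_face: "a \<in> face_dir \<Delta> \<xi>0" and b_face: "b \<in> face_dir \<Delta> \<xi>0"
    using edge by auto
  obtain \<eta> s1 where \<eta>_pos: "\<forall>k. 0 < \<eta> $ k" and "a \<in> face_dir \<Delta> \<eta>" "s1 \<in> face_dir \<Delta> \<eta>"
    and "\<xi> \<bullet> s1 < \<xi> \<bullet> a" and level: "\<And>x. \<xi>0 \<bullet> x = \<xi>0 \<bullet> a \<Longrightarrow> \<xi> \<bullet> x = \<xi> \<bullet> a \<Longrightarrow> \<eta> \<bullet> x = \<eta> \<bullet> a"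
    using exists_tilted_face[OF \<open>finite S\<close> pos a_face[unfolded \<Delta>_def] \<open>\<xi> \<in> nonneg_orthant\<close>
        \<open>s0 \<in> S\<close> \<open>\<xi> \<bullet> s0 < \<xi> \<bullet> a\<close>] unfolding \<Delta>_def by blast
  define F where "F = face_dir \<Delta> \<eta>"
  have "\<xi>0 \<bullet> b = \<xi>0 \<bullet> a"
    using a_face b_face by (auto simp: face_dir_def intro: order.antisym)
  then have "b \<in> F"
    using level[of b] \<open>\<xi> \<bullet> a = \<xi> \<bullet> b\<close> face_dir_eq_sublevel[OF \<open>a \<in> face_dir \<Delta> \<eta>\<close>]
      b_face face_dir_subset by (auto simp: F_def)
  moreover have "a \<in> F" "s1 \<in> F" "convex F"
    using \<open>a \<in> face_dir \<Delta> \<eta>\<close> \<open>s1 \<in> face_dir \<Delta> \<eta>\<close>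
    by (simp_all add: F_def \<Delta>_def convex_face_dir convex_newton_polyhedron_of)
  ultimately have "closed_segment a b \<subseteq> F" "aff_dim {a, b, s1} \<le> aff_dim F"
    by (simp_all add: closed_segment_subset aff_dim_subset)
  moreover have "aff_dim {a, b, s1} = 2"
    using aff_dim_eq_2_if_separated[OF \<open>a \<noteq> b\<close> \<open>\<xi> \<bullet> a = \<xi> \<bullet> b\<close>, of s1] \<open>\<xi> \<bullet> s1 < \<xi> \<bullet> a\<close>
    by simp
  moreover have "is_compact_face \<Delta> F"
    using compact_face_dir[OF _ _ \<eta>_pos] closed_newton_polyhedron_of[OF \<open>finite S\<close>]
      newton_polyhedron_of_subset_nonneg_orthant[OF \<open>S \<subseteq> nonneg_orthant\<close>] \<eta>_pos
    by (auto simp: is_compact_face_def is_face_def F_def \<Delta>_def mem_nonneg_orthant less_imp_le)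
  ultimately show False
    using loose by auto
qed

lemma nonneg_orthant_nonzero_imp_pos:
  assumes "v \<noteq> 0" "v \<in> nonneg_orthant"
  obtains k where "0 < (v :: real ^ 'n) $ k"
proof -
  obtain k where "v $ k \<noteq> 0"
    using assms(1) by (auto simp: vec_eq_iff)
  then show ?thesis
    using that assms(2) by (auto simp: mem_nonneg_orthant less_le)
qed

lemma exists_min_ratio_coordinate:
  fixes v p :: "real ^ 'n"
  assumes "v \<noteq> 0" "v \<in> nonneg_orthant"
  obtains i where "0 < v $ i" "\<And>k. 0 < v $ k \<Longrightarrow> p $ i / v $ i * v $ k \<le> p $ k"
proof -
  have "{k. 0 < v $ k} \<noteq> {}"
    using nonneg_orthant_nonzero_imp_pos[OF assms] by blast
  then obtain i where "0 < v $ i" and least: "\<And>k. 0 < v $ k \<Longrightarrow> p $ i / v $ i \<le> p $ k / v $ k"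
    using ex_is_arg_min_if_finite[of "{k. 0 < v $ k}" "\<lambda>k. p $ k / v $ k"]
    by (auto simp: is_arg_min_linorder)
  then show ?thesis
    using that by (simp add: le_divide_eq)
qed

lemma mem_closed_segment_plus_nonneg_orthant_if_dominates:
  fixes a b p :: "real ^ 'n"
  assumes disjoint: "\<forall>i. min (a $ i) (b $ i) = 0" and "p \<in> nonneg_orthant"
    and "0 \<le> \<alpha>" "0 \<le> \<beta>" "1 \<le> \<alpha> + \<beta>"
    and dom_a: "\<And>k. 0 < a $ k \<Longrightarrow> \<alpha> * a $ k \<le> p $ k"
    and dom_b: "\<And>k. 0 < b $ k \<Longrightarrow> \<beta> * b $ k \<le> p $ k"
  shows "p \<in> closed_segment a b + nonneg_orthant"
proof -
  define l where "l = min \<alpha> 1"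
  have "0 \<le> 1 - l" "1 - l \<le> 1" "l \<le> \<alpha>" "1 - l \<le> \<beta>"
    using assms(3-5) by (auto simp: l_def)
  have "l * a $ k + (1 - l) * b $ k \<le> p $ k" for k
  proof -
    have "a $ k = 0 \<or> b $ k = 0" "0 \<le> a $ k" "0 \<le> b $ k"
      using disjoint[rule_format, of k] by (auto simp: min_def split: if_splits)
    then consider "0 < a $ k" "b $ k = 0" | "0 < b $ k" "a $ k = 0" | "a $ k = 0" "b $ k = 0"
      by (auto simp: less_le)
    then show ?thesis
    proof cases
      case 1
      then show ?thesis
        using dom_a[of k] \<open>l \<le> \<alpha>\<close> mult_right_mono[of l \<alpha> "a $ k"] by (simp, linarith)
    next
      case 2
      then show ?thesis
        using dom_b[of k] \<open>1 - l \<le> \<beta>\<close> mult_right_mono[of "1 - l" \<beta> "b $ k"] by (simp, linarith)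
    qed (use \<open>p \<in> nonneg_orthant\<close> in \<open>simp add: mem_nonneg_orthant\<close>)
  qed
  then have "p - ((1 - (1 - l)) *\<^sub>R a + (1 - l) *\<^sub>R b) \<in> nonneg_orthant"
    by (simp add: mem_nonneg_orthant)
  moreover have "(1 - (1 - l)) *\<^sub>R a + (1 - l) *\<^sub>R b \<in> closed_segment a b"
    using \<open>0 \<le> 1 - l\<close> \<open>1 - l \<le> 1\<close> unfolding closed_segment_def by blast
  ultimately show ?thesis
    by (metis add_diff_cancel_left' diff_add_cancel set_plus_intro)
qed

lemma mem_closed_segment_plus_nonneg_orthant:
  fixes a b p :: "real ^ 'n"
  assumes disjoint: "\<forall>i. min (a $ i) (b $ i) = 0" and "a \<noteq> 0" "b \<noteq> 0" "p \<in> nonneg_orthant"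
    and balanced: "\<And>\<xi>. \<xi> \<in> nonneg_orthant \<Longrightarrow> \<xi> \<bullet> a = \<xi> \<bullet> b \<Longrightarrow> \<xi> \<bullet> a \<le> \<xi> \<bullet> p"
  shows "p \<in> closed_segment a b + nonneg_orthant"
proof -
  have "a $ k = 0 \<or> b $ k = 0" "0 \<le> a $ k" "0 \<le> b $ k" for k
    using disjoint[rule_format, of k] by (auto simp: min_def split: if_splits)
  then have "a \<in> nonneg_orthant" "b \<in> nonneg_orthant"
    by (auto simp: mem_nonneg_orthant)
  obtain i where i: "0 < a $ i" and dom_a: "\<And>k. 0 < a $ k \<Longrightarrow> p $ i / a $ i * a $ k \<le> p $ k"
    using exists_min_ratio_coordinate[OF \<open>a \<noteq> 0\<close> \<open>a \<in> nonneg_orthant\<close>] by blast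
  obtain j where j: "0 < b $ j" and dom_b: "\<And>k. 0 < b $ k \<Longrightarrow> p $ j / b $ j * b $ k \<le> p $ k"
    using exists_min_ratio_coordinate[OF \<open>b \<noteq> 0\<close> \<open>b \<in> nonneg_orthant\<close>] by blast
  define \<xi> where "\<xi> = axis i (1 / a $ i) + axis j (1 / b $ j)"
  have \<xi>_inner: "\<xi> \<bullet> x = x $ i / a $ i + x $ j / b $ j" for x
    by (simp add: \<xi>_def inner_add_left axis_inner)
  have "\<xi> \<in> nonneg_orthant"
    unfolding \<xi>_def using i j by (intro nonneg_orthant_add axis_in_nonneg_orthant) auto
  moreover have "\<xi> \<bullet> a = 1" "\<xi> \<bullet> b = 1"
    using i j \<open>\<And>k. a $ k = 0 \<or> b $ k = 0\<close>[of i] \<open>\<And>k. a $ k = 0 \<or> b $ k = 0\<close>[of j]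
    by (auto simp: \<xi>_inner)
  ultimately have "1 \<le> p $ i / a $ i + p $ j / b $ j"
    using balanced[of \<xi>] by (simp add: \<xi>_inner)
  moreover have "0 \<le> p $ i / a $ i" "0 \<le> p $ j / b $ j"
    using i j \<open>p \<in> nonneg_orthant\<close> by (auto simp: mem_nonneg_orthant)
  ultimately show ?thesis
    using mem_closed_segment_plus_nonneg_orthant_if_dominates[OF disjoint \<open>p \<in> nonneg_orthant\<close>]
      dom_a dom_b by blast
qed

lemma loose_edge_newton_polyhedron_subset:
  fixes S :: "(real ^ 'n) set"
  defines "\<Delta> \<equiv> newton_polyhedron_of S"
  assumes "finite S" "S \<subseteq> nonneg_orthant" "\<xi>0 \<in> nonneg_orthant"
    and edge: "face_dir \<Delta> \<xi>0 = closed_segment a b"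
    and loose: "\<not> (\<exists>F. is_compact_face \<Delta> F \<and> aff_dim F \<ge> 2 \<and> closed_segment a b \<subseteq> F)"
    and "a \<noteq> b" and disjoint: "\<forall>i. min (a $ i) (b $ i) = 0"
  shows "\<Delta> \<subseteq> closed_segment a b + nonneg_orthant"
proof
  fix p assume "p \<in> \<Delta>"
  have "a \<noteq> 0" "b \<noteq> 0"
    using newton_polyhedron_segment_face_endpoint_nonzero[OF assms(3,4)] edge \<open>a \<noteq> b\<close>
    by (metis \<Delta>_def closed_segment_commute)+
  show "p \<in> closed_segment a b + nonneg_orthant"
  proof (rule mem_closed_segment_plus_nonneg_orthant[OF disjoint \<open>a \<noteq> 0\<close> \<open>b \<noteq> 0\<close>])
    show "p \<in> nonneg_orthant"
      using \<open>p \<in> \<Delta>\<close> newton_polyhedron_of_subset_nonneg_orthant[OF assms(3)] by (auto simp: \<Delta>_def)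
    show "\<xi> \<bullet> a \<le> \<xi> \<bullet> p" if "\<xi> \<in> nonneg_orthant" "\<xi> \<bullet> a = \<xi> \<bullet> b" for \<xi>
      using loose_edge_balanced_form_ge[OF assms(2,3) _ _ _ \<open>a \<noteq> b\<close> that]
        newton_polyhedron_segment_face_direction_pos[OF assms(4)] edge loose \<open>p \<in> \<Delta>\<close>
      unfolding \<Delta>_def by blast
  qed
qed

lemma vertex_eq_endpoint:
  assumes "a \<in> D" "b \<in> D" "D \<subseteq> closed_segment a b + nonneg_orthant" "is_vertex D v"
  shows "v = a \<or> v = (b :: real ^ 'n)"
proof -
  obtain \<xi> where "\<xi> \<in> nonneg_orthant" and face: "face_dir D \<xi> = {v}"
    using assms(4) by (auto simp: is_vertex_def is_face_def)
  then have "v \<in> D" and lowest: "\<And>c. c \<in> D \<Longrightarrow> \<xi> \<bullet> c \<le> \<xi> \<bullet> v \<Longrightarrow> c = v"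
    using face_dir_eq_sublevel[of v D \<xi>] by auto
  then have "v \<in> closed_segment a b + nonneg_orthant"
    using assms(3) by blast
  then obtain x w where "x \<in> closed_segment a b" "w \<in> nonneg_orthant" "v = x + w"
    by (rule set_plus_elim)
  moreover have "closed_segment a b \<subseteq> {y. min (\<xi> \<bullet> a) (\<xi> \<bullet> b) \<le> \<xi> \<bullet> y}"
    by (intro closed_segment_subset) (auto simp: convex_halfspace_ge)
  ultimately have "min (\<xi> \<bullet> a) (\<xi> \<bullet> b) \<le> \<xi> \<bullet> v"
    using inner_nonneg_orthant[OF \<open>\<xi> \<in> nonneg_orthant\<close>, of w]
    by (auto simp: inner_add_right)
  then show ?thesis
    using lowest assms(1,2) by (metis min_def)
qed

lemma endpoint_is_vertex:
  assumes "D \<subseteq> nonneg_orthant" "\<xi>0 \<in> nonneg_orthant"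
    and edge: "face_dir D \<xi>0 = closed_segment a b"
    and "\<forall>i. min (a $ i) (b $ i) = 0" "b \<noteq> 0"
  shows "is_vertex D (a :: real ^ 'n)"
proof -
  have "b \<in> nonneg_orthant"
    using edge assms(1) face_dir_subset by (metis ends_in_segment(2) subsetD)
  then obtain j where "0 < b $ j"
    using nonneg_orthant_nonzero_imp_pos \<open>b \<noteq> 0\<close> by blast
  then have "a $ j = 0"
    using assms(4) by (metis min.absorb_iff1 min_def order.strict_iff_not)
  define \<xi> where "\<xi> = \<xi>0 + axis j 1"
  have \<xi>_inner: "\<xi> \<bullet> x = \<xi>0 \<bullet> x + x $ j" for x
    by (simp add: \<xi>_def inner_add_left axis_inner)
  have a_face: "a \<in> face_dir D \<xi>0"
    using edge by simp
  have "face_dir D \<xi> = {a}"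
  proof (intro equalityI subsetI)
    fix p assume "p \<in> face_dir D \<xi>"
    then have "p \<in> D" "\<xi> \<bullet> p \<le> \<xi> \<bullet> a"
      using a_face by (auto simp: face_dir_def)
    moreover have "\<xi>0 \<bullet> a \<le> \<xi>0 \<bullet> p" "0 \<le> p $ j"
      using a_face \<open>p \<in> D\<close> assms(1) by (auto simp: face_dir_def mem_nonneg_orthant)
    ultimately have "p $ j = 0" "p \<in> face_dir D \<xi>0"
      using face_dir_eq_sublevel[OF a_face] \<open>a $ j = 0\<close> by (auto simp: \<xi>_inner)
    then obtain u where "0 \<le> u" "u \<le> 1" "p = (1 - u) *\<^sub>R a + u *\<^sub>R b" "u * b $ j = 0"
      using edge \<open>a $ j = 0\<close> by (auto simp: closed_segment_def)
    then show "p \<in> {a}"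
      using \<open>0 < b $ j\<close> by simp
  next
    fix p assume "p \<in> {a}"
    have "\<xi> \<bullet> a \<le> \<xi> \<bullet> q" if "q \<in> D" for q
    proof -
      have "\<xi>0 \<bullet> a \<le> \<xi>0 \<bullet> q" "0 \<le> q $ j"
        using a_face \<open>q \<in> D\<close> assms(1) by (auto simp: face_dir_def mem_nonneg_orthant)
      then show ?thesis
        using \<open>a $ j = 0\<close> by (simp add: \<xi>_inner)
    qed
    then show "p \<in> face_dir D \<xi>"
      using \<open>p \<in> {a}\<close> a_face face_dir_subset by (auto simp: face_dir_def)
  qed
  then show ?thesis
    using assms(2) by (auto simp: is_vertex_def is_face_def \<xi>_def
                           intro!: nonneg_orthant_add axis_in_nonneg_orthant)
qed

theorem lemma2p2:
  fixes \<Delta> E :: "(real ^ 'n) set" and a b :: "real ^ 'n"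
  assumes "is_newton_polyhedron \<Delta>"
    and "is_loose_edge \<Delta> E"
    and "a \<noteq> b" and "E = closed_segment a b"
    and "\<forall>i. min (a $ i) (b $ i) = 0"
  shows "{v. is_vertex \<Delta> v} = {a, b}"
proof -
  obtain S where "finite S" and S_nat: "\<forall>s\<in>S. \<forall>i. s $ i \<in> \<nat>" and \<Delta>: "\<Delta> = newton_polyhedron_of S"
    using assms(1) unfolding is_newton_polyhedron_def by blast
  have "S \<subseteq> nonneg_orthant"
    using S_nat by (auto simp: mem_nonneg_orthant) (metis Nats_cases of_nat_0_le_iff)
  then have \<Delta>_nonneg: "\<Delta> \<subseteq> nonneg_orthant"
    unfolding \<Delta> by (rule newton_polyhedron_of_subset_nonneg_orthant)
  obtain \<xi>0 where "\<xi>0 \<in> nonneg_orthant" and edge: "face_dir \<Delta> \<xi>0 = closed_segment a b"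
    and loose: "\<not> (\<exists>F. is_compact_face \<Delta> F \<and> aff_dim F \<ge> 2 \<and> closed_segment a b \<subseteq> F)"
    using assms(2,4) by (auto simp: is_loose_edge_def is_edge_def is_face_def)
  have "a \<noteq> 0" "b \<noteq> 0"
    using newton_polyhedron_segment_face_endpoint_nonzero[OF \<open>S \<subseteq> nonneg_orthant\<close> \<open>\<xi>0 \<in> nonneg_orthant\<close>]
      edge assms(3) closed_segment_commute unfolding \<Delta> by metis+
  have "\<Delta> \<subseteq> closed_segment a b + nonneg_orthant"
    using loose_edge_newton_polyhedron_subset[OF \<open>finite S\<close> \<open>S \<subseteq> nonneg_orthant\<close>
        \<open>\<xi>0 \<in> nonneg_orthant\<close> _ _ assms(3,5)] edge loose unfolding \<Delta> by blast
  moreover have "a \<in> \<Delta>" "b \<in> \<Delta>"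
    using edge face_dir_subset by (metis ends_in_segment subsetD)+
  ultimately have "v = a \<or> v = b" if "is_vertex \<Delta> v" for v
    using vertex_eq_endpoint that by blast
  moreover have "is_vertex \<Delta> a"
    using endpoint_is_vertex[OF \<Delta>_nonneg \<open>\<xi>0 \<in> nonneg_orthant\<close> edge assms(5) \<open>b \<noteq> 0\<close>] .
  moreover have "is_vertex \<Delta> b"
    using endpoint_is_vertex[OF \<Delta>_nonneg \<open>\<xi>0 \<in> nonneg_orthant\<close>, of b a] \<open>a \<noteq> 0\<close> edge assms(5)
    by (simp add: closed_segment_commute min.commute)
  ultimately show ?thesis
    by blast
qed

end
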